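(* Let $x\in[0,1)$ be a $b$-imal number of depth $l$, and let $X$ be the string of length $l$ with $n(X)/b^l=x$. Let $j$ be the number of occurrences of $d$ in $X$. Let $l'\ge l$, and set $j'=j$ if $d>0$ and $j'=j+l'-l$ if $d=0$. Let $U$ be any subset of the open interval $(x,x+b^{-l'})$ and let $k\in\mathbb N$. Then: if $k<j'$, $\mu_k(U)=0$; if $k\ge j'$, $\mu_k(U)=b^{-l'}\mu_{k-j'}\big(b^{l'}U-b^{l'}x\big)$, where $b^{l'}U-b^{l'}x=\{b^{l'}(y-x):y\in U\}$.
   Context: Fix $b\ge2$ and $d\in\{0,\dots,b-1\}$; $\mathbb N=\{0,1,2,\dots\}$. A $b$-imal number is an element of $\bigcup_{l\ge0}b^{-l}\mathbb Z$; its depth is the smallest $l\ge0$ with $x\in b^{-l}\mathbb Z$. A string is a finite sequence $X=(d_l,\dots,d_1)$ of digits in $\{0,\dots,b-1\}$ (leading zeros allowed), of length $|X|=l\ge0$; its value is $n(X)=\sum_{i=1}^{l}d_ib^{i-1}$ ($0$ for the empty string). For $k\ge0$, $\mu_k=\sum_{X}b^{-|X|}\delta_{n(X)/b^{|X|}}$, the sum over all strings $X$ containing $d$ exactly $k$ times (masses at the same point add); it is a measure on $[0,1)$ of total mass $b$, defined on all subsets. *)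

theory Defs
  imports "HOL-Analysis.Analysis"
begin

text \<open>Strings are lists of digits, most significant digit first:
  the list [d_l, ..., d_1] has value sum d_i b^(i-1).\<close>

definition is_string :: "nat \<Rightarrow> nat list \<Rightarrow> bool" where
  "is_string b X \<longleftrightarrow> (\<forall>c\<in>set X. c < b)"

definition str_val :: "nat \<Rightarrow> nat list \<Rightarrow> nat" where
  "str_val b X = foldl (\<lambda>acc c. acc * b + c) 0 X"

definition is_bimal :: "nat \<Rightarrow> real \<Rightarrow> bool" where
  "is_bimal b x \<longleftrightarrow> (\<exists>l::nat. x * real b ^ l \<in> \<int>)"

definition bimal_depth :: "nat \<Rightarrow> real \<Rightarrow> nat" where
  "bimal_depth b x = (LEAST l::nat. x * real b ^ l \<in> \<int>)"

definition mu :: "nat \<Rightarrow> nat \<Rightarrow> nat \<Rightarrow> real set \<Rightarrow> ennreal" where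
  "mu b d k U = infsum (\<lambda>X. ennreal (1 / real b ^ length X))
     {X. is_string b X \<and> count_list X d = k \<and> real (str_val b X) / real b ^ length X \<in> U}"

end

theory Submission
  imports Defs
begin

text \<open>A string Y whose point n(Y)/b^|Y| lies in the open b-adic cell
  (n(P)/b^|P|, (n(P)+1)/b^|P|) of a string P has P as a prefix: a string no longer than P
  has its point on the grid of spacing b^-|P|, hence not strictly inside the cell, and a longer
  string has its point in that cell only if its first |P| digits spell P. So the strings
  charged by \<mu>_k on a subset of the cell are exactly the P @ Z with Z charged by \<mu>_(k-c)
  on the rescaled set, c being the number of digits d in P, and the weight b^-|P @ Z| splits as
  b^-|P| b^-|Z|. The theorem is the case where P is X padded with l' - l zeros, which has the
  same point x and contains d exactly j' times.\<close>

lemma count_list_replicate [simp]: "count_list (replicate n a) c = (if a = c then n else 0)"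
  by (induction n) auto

lemma str_val_Nil [simp]: "str_val b [] = 0"
  by (simp add: str_val_def)

lemma str_val_snoc: "str_val b (A @ [c]) = str_val b A * b + c"
  by (simp add: str_val_def)

lemma str_val_append: "str_val b (A @ B) = str_val b A * b ^ length B + str_val b B"
proof (induction B rule: rev_induct)
  case (snoc c B)
  then show ?case
    by (simp only: append_assoc[symmetric] str_val_snoc) (simp add: algebra_simps)
qed simp

lemma str_val_replicate_0 [simp]: "str_val b (replicate n 0) = 0"
  by (induction n) (simp_all add: str_val_def)

lemma str_val_less_power: "is_string b X \<Longrightarrow> str_val b X < b ^ length X"
proof (induction X rule: rev_induct)
  case (snoc c X)
  then have IH: "str_val b X + 1 \<le> b ^ length X" and "c < b" by (auto simp: is_string_def)
  then have "str_val b X * b + c < (str_val b X + 1) * b" by simp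
  also have "\<dots> \<le> b ^ length X * b" using mult_le_mono1[OF IH] .
  finally show ?case by (simp add: str_val_snoc mult.commute)
qed simp

lemma str_val_inj:
  assumes "is_string b A" "is_string b B" "length A = length B" "str_val b A = str_val b B"
  shows "A = B"
  using assms
proof (induction A arbitrary: B rule: rev_induct)
  case (snoc c A)
  then obtain B' c' where B: "B = B' @ [c']"
    by (metis length_0_conv rev_exhaust snoc_eq_iff_butlast)
  have digits: "c < b" "c' < b" and strings: "is_string b A" "is_string b B'"
    using snoc.prems B by (auto simp: is_string_def)
  have val: "str_val b A * b + c = str_val b B' * b + c'"
    using snoc.prems B by (simp add: str_val_snoc)
  then have "c = c'"
    using digits by (metis mod_less mod_mult_self3)
  with val digits have "str_val b A = str_val b B'" by simp
  with snoc.IH strings snoc.prems B have "A = B'" by simp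
  with B \<open>c = c'\<close> show ?case by simp
qed simp

lemma str_val_append_div:
  "is_string b Z \<Longrightarrow> str_val b (A @ Z) div b ^ length Z = str_val b A"
  by (intro div_nat_eqI) (simp_all add: str_val_append str_val_less_power algebra_simps)

lemma inside_power_cell_div_eq:
  fixes b :: nat
  assumes "0 < b" and lower: "N * b ^ m < v * b ^ n" and upper: "v * b ^ n < (N + 1) * b ^ m"
  shows "n < m \<and> v div b ^ (m - n) = N"
proof -
  have "n < m"
  proof (rule ccontr)
    assume "\<not> n < m"
    then have split: "b ^ n = b ^ (n - m) * b ^ m"
      by (simp add: power_add[symmetric])
    have "N * b ^ m < (v * b ^ (n - m)) * b ^ m" "(v * b ^ (n - m)) * b ^ m < (N + 1) * b ^ m"
      using lower upper by (simp_all only: split mult.assoc)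
    then have "N < v * b ^ (n - m)" "v * b ^ (n - m) < N + 1"
      by (metis mult_less_cancel2)+
    then show False by simp
  qed
  moreover have split: "b ^ m = b ^ (m - n) * b ^ n"
    using \<open>n < m\<close> by (simp add: power_add[symmetric])
  have "N * b ^ (m - n) * b ^ n < v * b ^ n" "v * b ^ n < (N + 1) * b ^ (m - n) * b ^ n"
    using lower upper by (simp_all only: split mult.assoc)
  then have "N * b ^ (m - n) < v" "v < (N + 1) * b ^ (m - n)"
    by (metis mult_less_cancel2)+
  then have "v div b ^ (m - n) = N"
    by (intro div_nat_eqI) (simp_all add: mult.commute)
  ultimately show ?thesis by simp
qed

definition str_point :: "nat \<Rightarrow> nat list \<Rightarrow> real" where
  "str_point b X = real (str_val b X) / real b ^ length X"

lemma str_point_append: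
  "0 < b \<Longrightarrow> str_point b (P @ Z) = str_point b P + str_point b Z / real b ^ length P"
  by (simp add: str_point_def str_val_append power_add field_simps)

lemma str_point_append_zeros [simp]: "0 < b \<Longrightarrow> str_point b (X @ replicate n 0) = str_point b X"
  by (simp add: str_point_append) (simp add: str_point_def)

lemma str_point_in_cell_imp_prefix:
  assumes "0 < b" "is_string b P" "is_string b Y"
    and "str_point b Y \<in> {str_point b P <..< str_point b P + 1 / real b ^ length P}"
  shows "\<exists>Z. Y = P @ Z"
proof -
  define n m N v where "n = length P" and "m = length Y" and "N = str_val b P" and "v = str_val b Y"
  have "real N / real b ^ n < real v / real b ^ m" "real v / real b ^ m < (real N + 1) / real b ^ n"
    using assms(4) by (simp_all add: str_point_def n_def m_def N_def v_def add_divide_distrib)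
  then have "real (N * b ^ m) < real (v * b ^ n)" "real (v * b ^ n) < real ((N + 1) * b ^ m)"
    using \<open>0 < b\<close> by (simp_all add: divide_simps algebra_simps)
  then have "n < m \<and> v div b ^ (m - n) = N"
    using \<open>0 < b\<close> by (intro inside_power_cell_div_eq) (simp_all only: of_nat_less_iff)
  moreover have "is_string b (take n Y)" "is_string b (drop n Y)"
    using \<open>is_string b Y\<close> by (auto simp: is_string_def dest: in_set_takeD in_set_dropD)
  ultimately have "str_val b (take n Y) = str_val b P" "length (take n Y) = length P"
    using str_val_append_div[of b "drop n Y" "take n Y"]
    by (simp_all add: n_def m_def N_def v_def)
  then have "take n Y = P"
    using \<open>is_string b (take n Y)\<close> \<open>is_string b P\<close> by (intro str_val_inj) simp_all
  then show ?thesis by (metis append_take_drop_id)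
qed

lemma infsum_cmult_right_ennreal:
  fixes g :: "'a \<Rightarrow> ennreal"
  assumes "c < top"
  shows "(\<Sum>\<^sub>\<infinity>z\<in>A. c * g z) = c * (\<Sum>\<^sub>\<infinity>z\<in>A. g z)"
proof -
  have "(g has_sum infsum g A) A"
    by (intro has_sum_infsum nonneg_summable_on_complete) simp
  then have "(sum g \<longlongrightarrow> infsum g A) (finite_subsets_at_top A)"
    by (simp add: has_sum_def)
  then have "((\<lambda>F. c * sum g F) \<longlongrightarrow> c * infsum g A) (finite_subsets_at_top A)"
    by (rule ennreal_tendsto_cmult[OF assms])
  then show ?thesis
    by (intro infsumI) (simp add: has_sum_def sum_distrib_left)
qed

lemma mu_eq_infsum_str_point:
  "mu b d k U = (\<Sum>\<^sub>\<infinity>X\<in>{X. is_string b X \<and> count_list X d = k \<and> str_point b X \<in> U}.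
     ennreal (1 / real b ^ length X))"
  by (simp add: mu_def str_point_def)

lemma mem_rescaled_image_iff:
  fixes c :: real
  assumes "c \<noteq> 0"
  shows "z \<in> (\<lambda>y. c * (y - a)) ` U \<longleftrightarrow> a + z / c \<in> U"
proof
  assume "a + z / c \<in> U"
  moreover have "z = c * ((a + z / c) - a)" using assms by simp
  ultimately show "z \<in> (\<lambda>y. c * (y - a)) ` U" by blast
qed (use assms in auto)

lemma strings_in_cell_eq_image_append:
  assumes "0 < b" "is_string b P"
    and cell: "U \<subseteq> {str_point b P <..< str_point b P + 1 / real b ^ length P}"
  shows "{Y. is_string b Y \<and> count_list Y d = k \<and> str_point b Y \<in> U} =
    (\<lambda>Z. P @ Z) ` {Z. is_string b Z \<and> count_list P d + count_list Z d = k \<and>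
       str_point b Z \<in> (\<lambda>y. real b ^ length P * (y - str_point b P)) ` U}"
    (is "?S = (\<lambda>Z. P @ Z) ` ?T")
proof
  show "?S \<subseteq> (\<lambda>Z. P @ Z) ` ?T"
  proof
    fix Y assume "Y \<in> ?S"
    then obtain Z where "Y = P @ Z"
      using str_point_in_cell_imp_prefix[OF assms(1,2)] cell by blast
    with \<open>Y \<in> ?S\<close> have "Z \<in> ?T"
      using \<open>0 < b\<close> by (auto simp: is_string_def str_point_append mem_rescaled_image_iff)
    with \<open>Y = P @ Z\<close> show "Y \<in> (\<lambda>Z. P @ Z) ` ?T" by blast
  qed
next
  show "(\<lambda>Z. P @ Z) ` ?T \<subseteq> ?S"
    using assms(1,2) by (auto simp: is_string_def str_point_append mem_rescaled_image_iff)
qed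

lemma mu_in_cell:
  assumes "0 < b" "is_string b P"
    and "U \<subseteq> {str_point b P <..< str_point b P + 1 / real b ^ length P}"
  shows "mu b d k U = (if k < count_list P d then 0
    else ennreal (1 / real b ^ length P) *
      mu b d (k - count_list P d) ((\<lambda>y. real b ^ length P * (y - str_point b P)) ` U))"
proof -
  define c V where "c = count_list P d" and "V = (\<lambda>y. real b ^ length P * (y - str_point b P)) ` U"
  define T where "T = {Z. is_string b Z \<and> c + count_list Z d = k \<and> str_point b Z \<in> V}"
  have "mu b d k U = (\<Sum>\<^sub>\<infinity>Y\<in>(\<lambda>Z. P @ Z) ` T. ennreal (1 / real b ^ length Y))"
    unfolding mu_eq_infsum_str_point T_def c_def V_def
    using strings_in_cell_eq_image_append[OF assms] by simp
  also have "\<dots> = (\<Sum>\<^sub>\<infinity>Z\<in>T. ennreal (1 / real b ^ length P) * ennreal (1 / real b ^ length Z))"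
    by (subst infsum_reindex) (simp_all add: inj_on_def o_def power_add ennreal_mult[symmetric])
  also have "\<dots> = ennreal (1 / real b ^ length P) * (\<Sum>\<^sub>\<infinity>Z\<in>T. ennreal (1 / real b ^ length Z))"
    by (simp add: infsum_cmult_right_ennreal)
  finally show ?thesis
    unfolding mu_eq_infsum_str_point T_def c_def[symmetric] V_def[symmetric]
    by (auto intro!: arg_cong[where f="\<lambda>T. _ * infsum _ T"])
qed

theorem mainTheorem12:
  fixes b d l l' k :: nat and x :: real and X :: "nat list" and U :: "real set"
  assumes "b \<ge> 2" and "d < b"
    and "0 \<le> x" and "x < 1"
    and "is_bimal b x" and "bimal_depth b x = l"
    and "is_string b X" and "length X = l" and "real (str_val b X) / real b ^ l = x"
    and "l' \<ge> l"
    and "U \<subseteq> {x <..< x + 1 / real b ^ l'}"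
  shows "let j = count_list X d; j' = (if d > 0 then j else j + l' - l) in
    (k < j' \<longrightarrow> mu b d k U = 0) \<and>
    (k \<ge> j' \<longrightarrow> mu b d k U =
       ennreal (1 / real b ^ l') * mu b d (k - j') ((\<lambda>y. real b ^ l' * (y - x)) ` U))"
proof -
  define P where "P = X @ replicate (l' - l) 0"
  have "0 < b" using \<open>b \<ge> 2\<close> by simp
  have P: "is_string b P" "length P = l'"
    using assms(7,8,10) \<open>0 < b\<close> by (auto simp: P_def is_string_def)
  have "str_point b P = str_point b X"
    using \<open>0 < b\<close> by (simp add: P_def)
  also have "\<dots> = x"
    using assms(8,9) by (simp add: str_point_def)
  finally have "str_point b P = x" .
  have "count_list P d = (if d > 0 then count_list X d else count_list X d + l' - l)"
    using \<open>l' \<ge> l\<close> by (auto simp: P_def)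
  then show ?thesis
    using mu_in_cell[OF \<open>0 < b\<close> P(1), of U d k] P \<open>str_point b P = x\<close> \<open>U \<subseteq> _\<close> by (simp add: Let_def)
qed

end
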